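(* Let $H=(V,E)$ be an unweighted hypergraph on $n$ vertices, and consider the algorithm Estimation$(H)$: compute a number $k>0$ with $\gamma_H(e)\ge k$ for all $e\in E$; set $H_0=H$ and $i=1$; while $H_{i-1}$ has edges, let $F_i=\textsc{WeakEdges}(H_{i-1},2^ik)$, set $\gamma'(e)=2^{i-1}k$ for every $e\in F_i$, set $H_i=H_{i-1}-F_i$ and increase $i$ by one. Here $\textsc{WeakEdges}(G,t)$ returns a set of edges of $G$ containing all $t$-weak edges of $G$. Let $c>0$. If $\textsc{WeakEdges}(G,t)$ outputs a $ct$-light set of edges of $G$ for every input $G,t$, then the output $\gamma'$ of Estimation$(H)$ satisfies $\sum_{e\in E}\frac{1}{\gamma'(e)}\le 2c(n-1)$.
   Context: A hypergraph $H=(V,E)$ has edges that are subsets of $V$. For $U\subseteq V$, $H[U]=(U,\{e\in E:e\subseteq U\})$; for $A\subseteq V$, $\delta_H(A)$ is the set of edges meeting both $A$ and $V\setminus A$; $\lambda(H)=\min_{\emptyset\subsetneq A\subsetneq V}|\delta_H(A)|$. The strength of $e$ is $\gamma_H(e)=\max_{e\subseteq U\subseteq V}\lambda(H[U])$; an edge is $t$-weak in $G$ if its strength in $G$ is less than $t$. $\kappa(G)$ is the number of connected components of $G$. A set $E'\subseteq E(G)$ is $\ell$-light if $|E'|\le\ell(\kappa(G-E')-\kappa(G))$. *)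

theory Defs
  imports Complex_Main
begin

definition induced_edges :: "'a set set \<Rightarrow> 'a set \<Rightarrow> 'a set set" where
  "induced_edges E U = {e \<in> E. e \<subseteq> U}"

definition cut_edges :: "'a set \<Rightarrow> 'a set set \<Rightarrow> 'a set \<Rightarrow> 'a set set" where
  "cut_edges V E A = {e \<in> E. e \<inter> A \<noteq> {} \<and> e \<inter> (V - A) \<noteq> {}}"

text \<open>lambda(H) = min over nonempty proper subsets A of |delta_H(A)|
  (only meaningful when V has at least two vertices).\<close>
definition edge_conn :: "'a set \<Rightarrow> 'a set set \<Rightarrow> nat" where
  "edge_conn V E = Min {card (cut_edges V E A) | A. A \<noteq> {} \<and> A \<subset> V}"

definition strength :: "'a set \<Rightarrow> 'a set set \<Rightarrow> 'a set \<Rightarrow> nat" where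
  "strength V E e = Max {edge_conn U (induced_edges E U) | U. e \<subseteq> U \<and> U \<subseteq> V}"

definition weak :: "'a set \<Rightarrow> 'a set set \<Rightarrow> real \<Rightarrow> 'a set \<Rightarrow> bool" where
  "weak V E t e \<longleftrightarrow> real (strength V E e) < t"

definition conn_rel :: "'a set \<Rightarrow> 'a set set \<Rightarrow> ('a \<times> 'a) set" where
  "conn_rel V E = ({(u, v). u \<in> V \<and> v \<in> V \<and> (\<exists>e\<in>E. u \<in> e \<and> v \<in> e)})\<^sup>*"

definition num_components :: "'a set \<Rightarrow> 'a set set \<Rightarrow> nat" where
  "num_components V E = card (V // conn_rel V E)"

definition light :: "real \<Rightarrow> 'a set \<Rightarrow> 'a set set \<Rightarrow> 'a set set \<Rightarrow> bool" where
  "light l V E F \<longleftrightarrow>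
     real (card F) \<le> l * (real (num_components V (E - F)) - real (num_components V E))"

text \<open>The algorithm Estimation(H), with the subroutine WeakEdges given as a function
  W V E t (returning a set of edges of the hypergraph (V,E)).
  est_H i is H_i; est_F i is F_i (for i \<ge> 1).\<close>
primrec est_H :: "('a set \<Rightarrow> 'a set set \<Rightarrow> real \<Rightarrow> 'a set set) \<Rightarrow> 'a set \<Rightarrow> 'a set set
                   \<Rightarrow> real \<Rightarrow> nat \<Rightarrow> 'a set set" where
  "est_H W V E k 0 = E"
| "est_H W V E k (Suc i) =
     est_H W V E k i - W V (est_H W V E k i) (2 ^ Suc i * k)"

definition est_F :: "('a set \<Rightarrow> 'a set set \<Rightarrow> real \<Rightarrow> 'a set set) \<Rightarrow> 'a set \<Rightarrow> 'a set set
                   \<Rightarrow> real \<Rightarrow> nat \<Rightarrow> 'a set set" where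
  "est_F W V E k i = W V (est_H W V E k (i - 1)) (2 ^ i * k)"

definition est_gamma :: "('a set \<Rightarrow> 'a set set \<Rightarrow> real \<Rightarrow> 'a set set) \<Rightarrow> 'a set \<Rightarrow> 'a set set
                   \<Rightarrow> real \<Rightarrow> 'a set \<Rightarrow> real" where
  "est_gamma W V E k e =
     (let i = (LEAST i. 1 \<le> i \<and> e \<in> est_F W V E k i) in 2 ^ (i - 1) * k)"

end

theory Submission
  imports Defs
begin

text \<open>Round \<open>i\<close> of the algorithm removes a set \<open>F\<^sub>i\<close> that is \<open>c 2\<^sup>i k\<close>-light, and each of its
  edges receives \<open>1/\<gamma>' = 1/(2\<^sup>i\<^sup>-\<^sup>1 k)\<close>; so the contribution of round \<open>i\<close> is at most \<open>2c\<close> times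
  the increase in the number of components. Summing over all rounds telescopes to
  \<open>2c (\<kappa>(H\<^sub>N) - \<kappa>(H)) \<le> 2c (n - 1)\<close>. The loop terminates because a hypergraph with \<open>m\<close>
  edges has all strengths at most \<open>m\<close>, so every remaining edge is weak once \<open>2\<^sup>i k > m\<close>.\<close>

lemma est_H_subset: "est_H W V E k m \<subseteq> E"
  by (induction m) auto

lemma est_H_antimono: "j \<le> m \<Longrightarrow> est_H W V E k m \<subseteq> est_H W V E k j"
  by (induction m) (auto simp: le_Suc_eq)

lemma est_F_disjoint_est_H: "1 \<le> j \<Longrightarrow> est_F W V E k j \<inter> est_H W V E k j = {}"
  by (cases j) (auto simp: est_F_def)

lemma est_gamma_eq:
  assumes "e \<in> est_F W V E k (Suc m)" and "e \<in> est_H W V E k m"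
  shows "est_gamma W V E k e = 2 ^ m * k"
proof -
  have "(LEAST i. 1 \<le> i \<and> e \<in> est_F W V E k i) = Suc m"
  proof (rule Least_equality)
    fix j assume j: "1 \<le> j \<and> e \<in> est_F W V E k j"
    show "Suc m \<le> j"
    proof (rule ccontr)
      assume "\<not> Suc m \<le> j"
      then have "est_H W V E k m \<subseteq> est_H W V E k j" by (intro est_H_antimono) simp
      then have "e \<in> est_H W V E k j" using assms(2) by blast
      with j show False using est_F_disjoint_est_H[of j] by blast
    qed
  qed (use assms(1) in simp)
  then show ?thesis unfolding est_gamma_def by simp
qed

lemma edge_conn_le_card_cut_edges:
  assumes "finite V" and "A \<noteq> {}" and "A \<subset> V"
  shows "edge_conn V E \<le> card (cut_edges V E A)"
  unfolding edge_conn_def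
proof (rule Min_le)
  have "{card (cut_edges V E A) | A. A \<noteq> {} \<and> A \<subset> V}
          \<subseteq> (\<lambda>A. card (cut_edges V E A)) ` Pow V" by auto
  then show "finite {card (cut_edges V E A) | A. A \<noteq> {} \<and> A \<subset> V}"
    by (rule finite_subset) (simp add: assms(1))
qed (use assms in blast)

lemma strength_le_card:
  assumes "finite V" and "finite E" and "e \<subseteq> V" and "2 \<le> card e"
  shows "strength V E e \<le> card E"
  unfolding strength_def
proof (rule Max.boundedI)
  have "{edge_conn U (induced_edges E U) | U. e \<subseteq> U \<and> U \<subseteq> V}
          \<subseteq> (\<lambda>U. edge_conn U (induced_edges E U)) ` Pow V" by auto
  then show "finite {edge_conn U (induced_edges E U) | U. e \<subseteq> U \<and> U \<subseteq> V}"
    by (rule finite_subset) (simp add: assms(1))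
  show "{edge_conn U (induced_edges E U) | U. e \<subseteq> U \<and> U \<subseteq> V} \<noteq> {}"
    using assms(3) by blast
next
  fix s assume "s \<in> {edge_conn U (induced_edges E U) | U. e \<subseteq> U \<and> U \<subseteq> V}"
  then obtain U where U: "e \<subseteq> U" "U \<subseteq> V" and s: "s = edge_conn U (induced_edges E U)"
    by blast
  obtain x where x: "x \<in> e" using assms(4) by fastforce
  have "\<not> e \<subseteq> {x}"
  proof
    assume "e \<subseteq> {x}"
    then have "card e \<le> card {x}" by (intro card_mono) auto
    then show False using assms(4) by simp
  qed
  then obtain y where "y \<in> e" "y \<noteq> x" by blast
  then have "{x} \<subset> U" using x U(1) by blast
  moreover have "finite U" using U(2) assms(1) by (rule finite_subset)
  ultimately have "s \<le> card (cut_edges U (induced_edges E U) {x})"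
    unfolding s by (intro edge_conn_le_card_cut_edges) auto
  also have "\<dots> \<le> card E"
    using assms(2) by (intro card_mono) (auto simp: cut_edges_def induced_edges_def)
  finally show "s \<le> card E" .
qed

lemma quotient_conn_rel_eq_image: "V // conn_rel V E = (\<lambda>x. conn_rel V E `` {x}) ` V"
  by (auto simp: quotient_def)

lemma num_components_le_card: "finite V \<Longrightarrow> num_components V E \<le> card V"
  unfolding num_components_def quotient_conn_rel_eq_image by (rule card_image_le)

lemma one_le_num_components: "finite V \<Longrightarrow> V \<noteq> {} \<Longrightarrow> 1 \<le> num_components V E"
  unfolding num_components_def quotient_conn_rel_eq_image
  by (simp add: Suc_le_eq card_gt_0_iff)

lemma sum_inverse_est_gamma_telescope:
  fixes k c :: real
  assumes "finite E" and "0 < k"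
    and W_sub: "\<forall>E' t. E' \<subseteq> E \<and> 0 < t \<longrightarrow> W V E' t \<subseteq> E'"
    and W_light: "\<forall>E' t. E' \<subseteq> E \<and> 0 < t \<longrightarrow> light (c * t) V E' (W V E' t)"
  shows "(\<Sum>e\<in>E - est_H W V E k m. 1 / est_gamma W V E k e)
           \<le> 2 * c * (real (num_components V (est_H W V E k m)) - real (num_components V E))"
proof (induction m)
  case (Suc m)
  let ?H = "est_H W V E k" and ?\<kappa> = "\<lambda>m. real (num_components V (est_H W V E k m))"
  define F where "F = est_F W V E k (Suc m)"
  have HmE: "?H m \<subseteq> E" by (rule est_H_subset)
  have t: "0 < (2::real) ^ Suc m * k" using \<open>0 < k\<close> by simp
  have FH: "F \<subseteq> ?H m"
    unfolding F_def est_F_def using W_sub HmE t by simp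
  have split: "E - ?H (Suc m) = (E - ?H m) \<union> F" "(E - ?H m) \<inter> F = {}"
    using FH HmE by (auto simp: F_def est_F_def)
  have "finite F" using FH HmE \<open>finite E\<close> by (meson finite_subset)
  have "(\<Sum>e\<in>F. 1 / est_gamma W V E k e) = (\<Sum>e\<in>F. 1 / (2 ^ m * k))"
    using FH by (intro sum.cong) (auto simp: F_def est_gamma_eq)
  also have "\<dots> = real (card F) / (2 ^ m * k)" by simp
  also have "\<dots> \<le> 2 * c * (?\<kappa> (Suc m) - ?\<kappa> m)"
  proof -
    have "real (card F) \<le> c * (2 ^ Suc m * k) * (?\<kappa> (Suc m) - ?\<kappa> m)"
      using W_light HmE t unfolding light_def F_def est_F_def by simp
    also have "\<dots> = 2 * c * (?\<kappa> (Suc m) - ?\<kappa> m) * (2 ^ m * k)" by simp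
    finally show ?thesis using \<open>0 < k\<close> by (simp add: pos_divide_le_eq)
  qed
  finally have "(\<Sum>e\<in>F. 1 / est_gamma W V E k e) \<le> 2 * c * (?\<kappa> (Suc m) - ?\<kappa> m)" .
  moreover have "(\<Sum>e\<in>E - ?H (Suc m). 1 / est_gamma W V E k e)
      = (\<Sum>e\<in>E - ?H m. 1 / est_gamma W V E k e) + (\<Sum>e\<in>F. 1 / est_gamma W V E k e)"
    unfolding split(1) using \<open>finite E\<close> \<open>finite F\<close> split(2) by (simp add: sum.union_disjoint)
  moreover have "2 * c * (?\<kappa> (Suc m) - ?\<kappa> m) + 2 * c * (?\<kappa> m - real (num_components V E))
      = 2 * c * (?\<kappa> (Suc m) - real (num_components V E))" by (simp only: algebra_simps)
  ultimately show ?case using Suc.IH by linarith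
qed simp

lemma est_H_eventually_empty:
  fixes k :: real
  assumes "finite V" and edges: "\<forall>e\<in>E. e \<subseteq> V \<and> 2 \<le> card e"
    and W_weak: "\<forall>E' t. E' \<subseteq> E \<and> 0 < t \<longrightarrow> (\<forall>e\<in>E'. weak V E' t e \<longrightarrow> e \<in> W V E' t)"
    and "finite E" and "0 < k" and large: "real (card E) < 2 ^ Suc m * k"
  shows "est_H W V E k (Suc m) = {}"
proof -
  have HmE: "est_H W V E k m \<subseteq> E" by (rule est_H_subset)
  have "e \<in> W V (est_H W V E k m) (2 ^ Suc m * k)" if e: "e \<in> est_H W V E k m" for e
  proof -
    have "finite (est_H W V E k m)" using \<open>finite E\<close> HmE by (rule finite_subset[rotated])
    then have "strength V (est_H W V E k m) e \<le> card (est_H W V E k m)"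
      using strength_le_card \<open>finite V\<close> edges HmE e by blast
    also have "\<dots> \<le> card E" using \<open>finite E\<close> HmE by (rule card_mono)
    finally have "weak V (est_H W V E k m) (2 ^ Suc m * k) e"
      unfolding weak_def using large by linarith
    then show ?thesis using W_weak HmE e \<open>0 < k\<close> by simp
  qed
  then have "est_H W V E k m \<subseteq> W V (est_H W V E k m) (2 ^ Suc m * k)" by blast
  then show ?thesis by simp
qed

theorem lemma3p2:
  fixes V :: "'a set" and E :: "'a set set"
    and W :: "'a set \<Rightarrow> 'a set set \<Rightarrow> real \<Rightarrow> 'a set set"
    and k c :: real
  assumes finV: "finite V"
    and edges: "\<forall>e\<in>E. e \<subseteq> V \<and> 2 \<le> card e"
    and kpos: "0 < k"
    and kbound: "\<forall>e\<in>E. k \<le> real (strength V E e)"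
    and cpos: "0 < c"
    and W_sub: "\<forall>E' t. E' \<subseteq> E \<and> 0 < t \<longrightarrow> W V E' t \<subseteq> E'"
    and W_weak: "\<forall>E' t. E' \<subseteq> E \<and> 0 < t \<longrightarrow> (\<forall>e\<in>E'. weak V E' t e \<longrightarrow> e \<in> W V E' t)"
    and W_light: "\<forall>E' t. E' \<subseteq> E \<and> 0 < t \<longrightarrow> light (c * t) V E' (W V E' t)"
  shows "(\<Sum>e\<in>E. 1 / est_gamma W V E k e) \<le> 2 * c * real (card V - 1)"
proof (cases "V = {}")
  case True
  then have "E = {}" using edges by fastforce
  then show ?thesis using cpos by simp
next
  case False
  have "E \<subseteq> Pow V" using edges by auto
  then have finE: "finite E" by (rule finite_subset) (simp add: finV)
  obtain m where "real (card E) / k < 2 ^ m" using real_arch_pow[of 2] by auto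
  then have "real (card E) < 2 ^ Suc m * k" using kpos by (simp add: pos_divide_less_eq)
  then have "est_H W V E k (Suc m) = {}"
    using est_H_eventually_empty finV edges W_weak finE kpos by blast
  moreover have "(\<Sum>e\<in>E - est_H W V E k (Suc m). 1 / est_gamma W V E k e)
      \<le> 2 * c * (real (num_components V (est_H W V E k (Suc m))) - real (num_components V E))"
    using finE kpos W_sub W_light by (rule sum_inverse_est_gamma_telescope)
  ultimately have "(\<Sum>e\<in>E. 1 / est_gamma W V E k e)
      \<le> 2 * c * (real (num_components V {}) - real (num_components V E))"
    by (simp only: Diff_empty)
  also have "\<dots> \<le> 2 * c * (real (card V) - 1)"
    using num_components_le_card[OF finV, of "{}"] one_le_num_components[OF finV False, of E] cpos
    by (intro mult_left_mono) auto
  finally show ?thesis using False finV by (simp add: Suc_le_eq card_gt_0_iff of_nat_diff)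
qed

end
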